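(* There exist point sets $U_n\subset\mathbb{R}^2$ of size $n^2/4+\Theta(n)$ such that every rooted directed tree with $n$ vertices has a planar dominance drawing with its vertices placed at distinct points of $U_n$.
   Context: A rooted (directed) tree is a tree whose edges are directed away from the root toward the leaves. A dominance drawing places vertices at distinct points so that there is a directed path from $u$ to $v$ if and only if both coordinates of $v$ are greater than or equal to the corresponding coordinates of $u$; it is planar if, with edges drawn as straight-line segments, no two edges cross. *)

theory Defs
  imports "HOL-Analysis.Analysis"
begin

definition rooted_tree :: "'a set \<Rightarrow> ('a \<times> 'a) set \<Rightarrow> 'a \<Rightarrow> bool" where
  "rooted_tree V E r \<longleftrightarrow>
     finite V \<and> E \<subseteq> V \<times> V \<and> r \<in> V \<and>
     (\<forall>u. (u, r) \<notin> E) \<and>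
     (\<forall>v\<in>V. v \<noteq> r \<longrightarrow> (\<exists>!u. (u, v) \<in> E)) \<and>
     (\<forall>v\<in>V. (r, v) \<in> E\<^sup>*)"

definition dominance_drawing ::
  "'a set \<Rightarrow> ('a \<times> 'a) set \<Rightarrow> ('a \<Rightarrow> real \<times> real) \<Rightarrow> bool" where
  "dominance_drawing V E p \<longleftrightarrow>
     inj_on p V \<and>
     (\<forall>u\<in>V. \<forall>v\<in>V. (u, v) \<in> E\<^sup>* \<longleftrightarrow>
        (fst (p u) \<le> fst (p v) \<and> snd (p u) \<le> snd (p v)))"

definition planar_straight_line ::
  "'a set \<Rightarrow> ('a \<times> 'a) set \<Rightarrow> ('a \<Rightarrow> real \<times> real) \<Rightarrow> bool" where
  "planar_straight_line V E p \<longleftrightarrow>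
     (\<forall>(a, b)\<in>E. \<forall>w\<in>V. w \<noteq> a \<and> w \<noteq> b \<longrightarrow> p w \<notin> closed_segment (p a) (p b)) \<and>
     (\<forall>(a, b)\<in>E. \<forall>(c, d)\<in>E. (a, b) \<noteq> (c, d) \<longrightarrow>
        closed_segment (p a) (p b) \<inter> closed_segment (p c) (p d) \<subseteq> p ` ({a, b} \<inter> {c, d}))"

definition planar_dominance_drawing_on ::
  "'a set \<Rightarrow> ('a \<times> 'a) set \<Rightarrow> (real \<times> real) set \<Rightarrow> bool" where
  "planar_dominance_drawing_on V E U \<longleftrightarrow>
     (\<exists>p. p ` V \<subseteq> U \<and> dominance_drawing V E p \<and> planar_straight_line V E p)"

end

theory Submission
  imports Defs
begin

text \<open>The root is drawn at the origin and its subtrees are merged in decreasing order of size.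
  If the forest built so far has N vertices and lies in the strip x \<le> N, the next subtree,
  of size m \<le> N + 1 because it is the smallest, is drawn recursively and put to the right
  (x \<ge> N + 1, y < m), while the forest is lifted above height m. The two parts neither dominate
  each other nor cross, and m \<le> N + 1 keeps every point inside the set U(n) of grid points
  (i, j) with i + j < n and either i = 0 or 2i + j \<ge> n; it has n + \<lfloor>n^2/4\<rfloor> points.
  Finally, no edge of the forest passes weakly below-left of a child of the root, so the
  segments from the origin to the children cross nothing.\<close>

section \<open>Segments in the plane\<close>

lemma linear_closed_segment_between:
  fixes f :: "'a::real_vector \<Rightarrow> real"
  assumes "linear f" and "z \<in> closed_segment a b"
  shows "min (f a) (f b) \<le> f z \<and> f z \<le> max (f a) (f b)"
proof -
  have "f z \<in> closed_segment (f a) (f b)"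
    using assms by (simp add: closed_segment_linear_image)
  then show ?thesis
    by (auto simp: closed_segment_eq_real_ivl split: if_splits)
qed

lemma linear_fst_plus_snd: "linear (\<lambda>x::real \<times> real. fst x + snd x)"
  by (intro linear_compose_add linear_fst linear_snd)

lemma closed_segment_le:
  fixes z :: "real \<times> real"
  assumes "z \<in> closed_segment a b" and "a \<le> c" and "b \<le> c"
  shows "z \<le> c"
  using linear_closed_segment_between[OF linear_fst assms(1)]
    linear_closed_segment_between[OF linear_snd assms(1)] assms(2,3)
  by (auto simp: less_eq_prod_def)

lemma closed_segment_ge:
  fixes z :: "real \<times> real"
  assumes "z \<in> closed_segment a b" and "c \<le> a" and "c \<le> b"
  shows "c \<le> z"
  using linear_closed_segment_between[OF linear_fst assms(1)]
    linear_closed_segment_between[OF linear_snd assms(1)] assms(2,3)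
  by (auto simp: less_eq_prod_def)

lemma closed_segment_0_nested:
  fixes P Q :: "'a::real_vector"
  assumes "z \<in> closed_segment 0 P" and "z \<in> closed_segment 0 Q" and "z \<noteq> 0"
  shows "P \<in> closed_segment 0 Q \<or> Q \<in> closed_segment 0 P"
proof -
  have nested: "P \<in> closed_segment 0 Q"
    if eq: "s *\<^sub>R P = t *\<^sub>R Q" and "0 < s" "0 \<le> t" "t \<le> s" for s t and P Q :: 'a
  proof -
    have "P = (1 / s) *\<^sub>R (s *\<^sub>R P)"
      using \<open>0 < s\<close> by simp
    also have "\<dots> = (t / s) *\<^sub>R Q"
      by (simp add: eq)
    finally show ?thesis
      using that by (auto simp: in_segment intro!: exI[of _ "t / s"])
  qed
  obtain s where "0 \<le> s" "s \<le> 1" "z = s *\<^sub>R P"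
    using assms(1) by (auto simp: in_segment)
  moreover obtain t where "0 \<le> t" "t \<le> 1" "z = t *\<^sub>R Q"
    using assms(2) by (auto simp: in_segment)
  ultimately show ?thesis
    using assms(3) nested[of s P t Q] nested[of t Q s P]
    by (cases "t \<le> s") auto
qed

lemma closed_segment_translate_iff:
  fixes z :: "'a::real_vector"
  shows "z \<in> closed_segment (a + d) (b + d) \<longleftrightarrow> z - d \<in> closed_segment a b"
  using closed_segment_translation_eq[of d "z - d" a b] by (simp add: add.commute)

lemma closed_segments_0_comparable:
  fixes P Q :: "real \<times> real"
  assumes "0 \<le> P" "0 \<le> Q" and "z \<in> closed_segment 0 P" "z \<in> closed_segment 0 Q" and "z \<noteq> 0"
  shows "P \<le> Q \<or> Q \<le> P"
  using closed_segment_0_nested[OF assms(3-5)] closed_segment_le assms(1,2) by blast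

section \<open>Dominance drawings and planarity\<close>

lemma dominance_drawing_iff:
  "dominance_drawing V E p \<longleftrightarrow> inj_on p V \<and> (\<forall>u\<in>V. \<forall>v\<in>V. (u, v) \<in> E\<^sup>* \<longleftrightarrow> p u \<le> p v)"
  by (simp add: dominance_drawing_def less_eq_prod_def)

lemma dominance_drawing_translate:
  "dominance_drawing V E (\<lambda>v. p v + d) \<longleftrightarrow> dominance_drawing V E p"
  by (simp add: dominance_drawing_iff inj_on_def)

lemma dominance_drawing_congI:
  "dominance_drawing V E p \<Longrightarrow> (\<And>v. v \<in> V \<Longrightarrow> p v = q v) \<Longrightarrow> dominance_drawing V E q"
  by (simp add: dominance_drawing_iff cong: inj_on_cong)

lemma planar_straight_lineI:
  assumes "\<And>a b w. (a, b) \<in> E \<Longrightarrow> w \<in> V \<Longrightarrow> w \<noteq> a \<Longrightarrow> w \<noteq> b \<Longrightarrow>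
      p w \<notin> closed_segment (p a) (p b)"
    and "\<And>a b c d z. (a, b) \<in> E \<Longrightarrow> (c, d) \<in> E \<Longrightarrow> (a, b) \<noteq> (c, d) \<Longrightarrow>
      z \<in> closed_segment (p a) (p b) \<Longrightarrow> z \<in> closed_segment (p c) (p d) \<Longrightarrow>
      z \<in> p ` ({a, b} \<inter> {c, d})"
  shows "planar_straight_line V E p"
  unfolding planar_straight_line_def using assms by blast

lemma planar_straight_line_vertex_off_edge:
  "planar_straight_line V E p \<Longrightarrow> (a, b) \<in> E \<Longrightarrow> w \<in> V \<Longrightarrow> w \<noteq> a \<Longrightarrow> w \<noteq> b \<Longrightarrow>
    p w \<notin> closed_segment (p a) (p b)"
  unfolding planar_straight_line_def by fastforce

lemma planar_straight_line_edges_meet: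
  "planar_straight_line V E p \<Longrightarrow> (a, b) \<in> E \<Longrightarrow> (c, d) \<in> E \<Longrightarrow> (a, b) \<noteq> (c, d) \<Longrightarrow>
    z \<in> closed_segment (p a) (p b) \<Longrightarrow> z \<in> closed_segment (p c) (p d) \<Longrightarrow>
    z \<in> p ` ({a, b} \<inter> {c, d})"
  unfolding planar_straight_line_def by fastforce

lemma planar_straight_line_translate:
  assumes "planar_straight_line V E p"
  shows "planar_straight_line V E (\<lambda>v. p v + d)"
proof (rule planar_straight_lineI)
  fix a b w assume "(a, b) \<in> E" "w \<in> V" "w \<noteq> a" "w \<noteq> b"
  then show "p w + d \<notin> closed_segment (p a + d) (p b + d)"
    using planar_straight_line_vertex_off_edge[OF assms] by (simp add: closed_segment_translate_iff)
next
  fix a b c e z assume "(a, b) \<in> E" "(c, e) \<in> E" "(a, b) \<noteq> (c, e)"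
    and "z \<in> closed_segment (p a + d) (p b + d)" "z \<in> closed_segment (p c + d) (p e + d)"
  then have "z - d \<in> p ` ({a, b} \<inter> {c, e})"
    using planar_straight_line_edges_meet[OF assms] by (simp add: closed_segment_translate_iff)
  then obtain x where "x \<in> {a, b} \<inter> {c, e}" and "z = p x + d"
    by (metis diff_add_cancel imageE)
  then show "z \<in> (\<lambda>v. p v + d) ` ({a, b} \<inter> {c, e})"
    by blast
qed

lemma planar_straight_line_congI:
  assumes pl: "planar_straight_line V E p" and E: "E \<subseteq> V \<times> V"
    and eq: "\<And>v. v \<in> V \<Longrightarrow> p v = q v"
  shows "planar_straight_line V E q"
proof (rule planar_straight_lineI)
  fix a b w assume "(a, b) \<in> E" "w \<in> V" "w \<noteq> a" "w \<noteq> b"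
  then show "q w \<notin> closed_segment (q a) (q b)"
    using planar_straight_line_vertex_off_edge[OF pl] eq E by fastforce
next
  fix a b c d z assume ab: "(a, b) \<in> E" "(c, d) \<in> E" "(a, b) \<noteq> (c, d)"
    and "z \<in> closed_segment (q a) (q b)" "z \<in> closed_segment (q c) (q d)"
  then have "z \<in> p ` ({a, b} \<inter> {c, d})"
    using planar_straight_line_edges_meet[OF pl] eq E by (metis mem_Sigma_iff subsetD)
  moreover have "p ` ({a, b} \<inter> {c, d}) = q ` ({a, b} \<inter> {c, d})"
    using ab E eq by (intro image_cong) auto
  ultimately show "z \<in> q ` ({a, b} \<inter> {c, d})"
    by simp
qed

lemma rtrancl_stays_in:
  assumes "E \<subseteq> A \<times> A" and "(u, v) \<in> E\<^sup>*" and "u \<in> A"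
  shows "v \<in> A"
  using assms(2,3) by (induction rule: rtrancl_induct) (use assms(1) in auto)

lemma rtrancl_Un_disjoint:
  assumes EA: "EA \<subseteq> A \<times> A" and EB: "EB \<subseteq> B \<times> B" and "A \<inter> B = {}" and u: "u \<in> A"
  shows "(u, v) \<in> (EA \<union> EB)\<^sup>* \<longleftrightarrow> (u, v) \<in> EA\<^sup>*"
proof
  assume "(u, v) \<in> (EA \<union> EB)\<^sup>*"
  then show "(u, v) \<in> EA\<^sup>*"
  proof (rule rtrancl_Un_separatorE, intro allI impI)
    fix x y assume "(u, x) \<in> EA\<^sup>*" and "(x, y) \<in> EB"
    moreover have "x \<in> A" using rtrancl_stays_in[OF EA \<open>(u, x) \<in> EA\<^sup>*\<close> u] .
    ultimately show "x = y" using EB \<open>A \<inter> B = {}\<close> by blast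
  qed
qed (simp add: in_rtrancl_UnI)

lemma dominance_drawing_Un:
  assumes domA: "dominance_drawing A EA p" and domB: "dominance_drawing B EB p"
    and EA: "EA \<subseteq> A \<times> A" and EB: "EB \<subseteq> B \<times> B"
    and incomparable: "\<And>a b. a \<in> A \<Longrightarrow> b \<in> B \<Longrightarrow> \<not> p a \<le> p b \<and> \<not> p b \<le> p a"
  shows "dominance_drawing (A \<union> B) (EA \<union> EB) p"
  unfolding dominance_drawing_iff
proof (intro conjI ballI)
  have disj: "A \<inter> B = {}"
    using incomparable by blast
  show "inj_on p (A \<union> B)"
    using domA domB incomparable unfolding dominance_drawing_iff inj_on_def
    by (metis Un_iff order_refl)
  fix u v assume u: "u \<in> A \<union> B" and v: "v \<in> A \<union> B"
  show "(u, v) \<in> (EA \<union> EB)\<^sup>* \<longleftrightarrow> p u \<le> p v"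
  proof (cases "u \<in> A")
    case True
    then have star: "(u, v) \<in> (EA \<union> EB)\<^sup>* \<longleftrightarrow> (u, v) \<in> EA\<^sup>*"
      using rtrancl_Un_disjoint[OF EA EB disj] by blast
    show ?thesis
    proof (cases "v \<in> A")
      case False
      then have "(u, v) \<notin> EA\<^sup>*" and "v \<in> B"
        using rtrancl_stays_in[OF EA _ \<open>u \<in> A\<close>] v by blast+
      then show ?thesis using star incomparable[OF \<open>u \<in> A\<close>] by blast
    qed (use star domA \<open>u \<in> A\<close> in \<open>simp add: dominance_drawing_iff\<close>)
  next
    case False
    then have "u \<in> B" using u by blast
    then have star: "(u, v) \<in> (EA \<union> EB)\<^sup>* \<longleftrightarrow> (u, v) \<in> EB\<^sup>*"
      using rtrancl_Un_disjoint[OF EB EA] disj by (metis Int_commute Un_commute)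
    show ?thesis
    proof (cases "v \<in> B")
      case False
      then have "(u, v) \<notin> EB\<^sup>*" and "v \<in> A"
        using rtrancl_stays_in[OF EB _ \<open>u \<in> B\<close>] v by blast+
      then show ?thesis using star incomparable[OF _ \<open>u \<in> B\<close>] by blast
    qed (use star domB \<open>u \<in> B\<close> in \<open>simp add: dominance_drawing_iff\<close>)
  qed
qed

lemma planar_straight_line_Un:
  assumes plA: "planar_straight_line A EA p" and plB: "planar_straight_line B EB p"
    and EA: "EA \<subseteq> A \<times> A" and EB: "EB \<subseteq> B \<times> B"
    and right: "\<And>v. v \<in> A \<Longrightarrow> k < fst (p v)" and left: "\<And>v. v \<in> B \<Longrightarrow> fst (p v) \<le> k"
  shows "planar_straight_line (A \<union> B) (EA \<union> EB) p"
proof -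
  have segA: "k < fst z" if "(a, b) \<in> EA" "z \<in> closed_segment (p a) (p b)" for a b z
  proof -
    have "k < fst (p a)" "k < fst (p b)"
      using EA that(1) right by auto
    then show ?thesis
      using linear_closed_segment_between[OF linear_fst that(2)] by linarith
  qed
  have segB: "fst z \<le> k" if "(a, b) \<in> EB" "z \<in> closed_segment (p a) (p b)" for a b z
  proof -
    have "fst (p a) \<le> k" "fst (p b) \<le> k"
      using EB that(1) left by auto
    then show ?thesis
      using linear_closed_segment_between[OF linear_fst that(2)] by linarith
  qed
  show ?thesis
  proof (rule planar_straight_lineI)
    fix a b w assume ab: "(a, b) \<in> EA \<union> EB" and w: "w \<in> A \<union> B" "w \<noteq> a" "w \<noteq> b"
    show "p w \<notin> closed_segment (p a) (p b)"
    proof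
      assume on: "p w \<in> closed_segment (p a) (p b)"
      then have "w \<in> A \<longleftrightarrow> (a, b) \<in> EA"
        using ab w(1) segA segB right left by (meson UnE not_le)
      then show False
        using ab w on planar_straight_line_vertex_off_edge[OF plA]
          planar_straight_line_vertex_off_edge[OF plB] by blast
    qed
  next
    fix a b c d z assume ab: "(a, b) \<in> EA \<union> EB" and cd: "(c, d) \<in> EA \<union> EB"
      and ne: "(a, b) \<noteq> (c, d)"
      and z: "z \<in> closed_segment (p a) (p b)" "z \<in> closed_segment (p c) (p d)"
    have "(a, b) \<in> EA \<longleftrightarrow> (c, d) \<in> EA"
      using ab cd segA[OF _ z(1)] segA[OF _ z(2)] segB[OF _ z(1)] segB[OF _ z(2)] by force
    then show "z \<in> p ` ({a, b} \<inter> {c, d})"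
      using ab cd planar_straight_line_edges_meet[OF plA _ _ ne z]
        planar_straight_line_edges_meet[OF plB _ _ ne z] by blast
  qed
qed

text \<open>This is what lets a new root at the origin be joined to every member of R without
  crossing an edge of E.\<close>

definition roots_exposed :: "('a \<times> 'a) set \<Rightarrow> 'a set \<Rightarrow> ('a \<Rightarrow> real \<times> real) \<Rightarrow> bool" where
  "roots_exposed E R p \<longleftrightarrow>
     (\<forall>\<rho>\<in>R. \<forall>a b z. (a, b) \<in> E \<longrightarrow> z \<in> closed_segment (p a) (p b) \<longrightarrow> z \<le> p \<rho> \<longrightarrow> z = p \<rho>)"

lemma exposed_root_on_edge:
  assumes pl: "planar_straight_line V E p" and exposed: "roots_exposed E R p"
    and "c \<in> R" "R \<subseteq> V" and ab: "(a, b) \<in> E"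
    and z: "z \<in> closed_segment (p a) (p b)" and "z \<le> p c"
  shows "z = p c" and "c \<in> {a, b}"
proof -
  show "z = p c"
    using exposed assms(3,7) ab z unfolding roots_exposed_def by blast
  with assms(3,4) z show "c \<in> {a, b}"
    using planar_straight_line_vertex_off_edge[OF pl ab] by blast
qed

locale forest_apex =
  fixes V :: "'a set" and E :: "('a \<times> 'a) set" and R :: "'a set" and r :: 'a
    and p :: "'a \<Rightarrow> real \<times> real"
  assumes planar: "planar_straight_line V E p" and edges: "E \<subseteq> V \<times> V" and apex: "r \<notin> V"
    and positive: "\<And>v. v \<in> V \<Longrightarrow> 0 \<le> p v \<and> 1 \<le> fst (p v) + snd (p v)"
    and roots: "R \<subseteq> V" and exposed: "roots_exposed E R p"
    and minimal: "\<And>c w. c \<in> R \<Longrightarrow> w \<in> V \<Longrightarrow> p w \<le> p c \<Longrightarrow> w = c"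
begin

definition extended :: "'a \<Rightarrow> real \<times> real" where
  "extended = p(r := 0)"

lemma extended_V: "v \<in> V \<Longrightarrow> extended v = p v"
  using apex by (auto simp: extended_def)

lemma extended_apex: "extended r = 0"
  by (simp add: extended_def)

lemma root_edge_below_root:
  assumes "c \<in> R" and "z \<in> closed_segment (extended r) (extended c)"
  shows "z \<le> p c"
  using assms closed_segment_le[of z 0 "p c" "p c"] positive roots
  by (auto simp: extended_apex extended_V)

lemma forest_edge_off_origin:
  assumes "(a, b) \<in> E" and "z \<in> closed_segment (extended a) (extended b)"
  shows "1 \<le> fst z + snd z"
proof -
  have "a \<in> V" "b \<in> V"
    using assms(1) edges by auto
  then have "z \<in> closed_segment (p a) (p b)"
    and "1 \<le> fst (p a) + snd (p a)" "1 \<le> fst (p b) + snd (p b)"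
    using assms(2) positive by (simp_all add: extended_V)
  then show ?thesis
    using linear_closed_segment_between[OF linear_fst_plus_snd, of z "p a" "p b"] by linarith
qed

lemma extended_vertex_off_edge:
  assumes ab: "(a, b) \<in> {r} \<times> R \<union> E" and w: "w \<in> insert r V" "w \<noteq> a" "w \<noteq> b"
  shows "extended w \<notin> closed_segment (extended a) (extended b)"
proof (cases "(a, b) \<in> E")
  case True
  show ?thesis
  proof (cases "w = r")
    case True
    then show ?thesis
      using forest_edge_off_origin[OF \<open>(a, b) \<in> E\<close>, of 0] by (auto simp: extended_apex)
  next
    case False
    then show ?thesis
      using planar_straight_line_vertex_off_edge[OF planar True, of w] w edges True
      by (auto simp: extended_V)
  qed
next
  case False
  with ab have "a = r" "b \<in> R" by auto
  moreover have "w \<in> V" using w \<open>a = r\<close> by auto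
  ultimately show ?thesis
  proof (intro notI)
    assume "extended w \<in> closed_segment (extended a) (extended b)"
    then have "p w \<le> p b"
      using root_edge_below_root[OF \<open>b \<in> R\<close>] \<open>a = r\<close> \<open>w \<in> V\<close> by (simp add: extended_V)
    then show False
      using minimal[OF \<open>b \<in> R\<close> \<open>w \<in> V\<close>] w by simp
  qed
qed

lemma root_edges_meet:
  assumes "c \<in> R" "d \<in> R" "c \<noteq> d"
    and z: "z \<in> closed_segment (extended r) (extended c)" "z \<in> closed_segment (extended r) (extended d)"
  shows "z = extended r"
proof (rule ccontr)
  assume "z \<noteq> extended r"
  moreover have "0 \<le> p c" "0 \<le> p d"
    using assms(1,2) roots positive by auto
  ultimately have "p c \<le> p d \<or> p d \<le> p c"
    using closed_segments_0_comparable z assms(1,2) roots by (simp add: extended_apex extended_V subset_iff)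
  then show False
    using minimal assms roots by blast
qed

lemma root_edge_meets_forest_edge:
  assumes "c \<in> R" and ab: "(a, b) \<in> E"
    and z: "z \<in> closed_segment (extended r) (extended c)" "z \<in> closed_segment (extended a) (extended b)"
  shows "z \<in> extended ` ({r, c} \<inter> {a, b})"
proof -
  have "a \<in> V" "b \<in> V" "c \<in> V"
    using ab edges assms(1) roots by auto
  then have "z = p c" and "c \<in> {a, b}"
    using exposed_root_on_edge[OF planar exposed assms(1) roots ab] root_edge_below_root[OF assms(1) z(1)]
      z(2) by (simp_all add: extended_V)
  then show ?thesis
    using \<open>c \<in> V\<close> by (intro image_eqI[of _ _ c]) (auto simp: extended_V)
qed

lemma planar_straight_line_extended: "planar_straight_line (insert r V) ({r} \<times> R \<union> E) extended"
proof (rule planar_straight_lineI)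
  fix a b c d z assume ab: "(a, b) \<in> {r} \<times> R \<union> E" and cd: "(c, d) \<in> {r} \<times> R \<union> E"
    and ne: "(a, b) \<noteq> (c, d)"
    and z: "z \<in> closed_segment (extended a) (extended b)" "z \<in> closed_segment (extended c) (extended d)"
  show "z \<in> extended ` ({a, b} \<inter> {c, d})"
  proof (cases "(a, b) \<in> E"; cases "(c, d) \<in> E")
    assume "(a, b) \<in> E" "(c, d) \<in> E"
    moreover from this have "a \<in> V" "b \<in> V" "c \<in> V" "d \<in> V"
      using edges by auto
    ultimately have "z \<in> p ` ({a, b} \<inter> {c, d})"
      using planar_straight_line_edges_meet[OF planar _ _ ne] z by (simp add: extended_V)
    moreover have "p ` ({a, b} \<inter> {c, d}) = extended ` ({a, b} \<inter> {c, d})"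
      using \<open>a \<in> V\<close> \<open>b \<in> V\<close> by (intro image_cong) (auto simp: extended_V)
    ultimately show ?thesis
      by simp
  next
    assume "(a, b) \<in> E" "(c, d) \<notin> E"
    then show ?thesis
      using cd root_edge_meets_forest_edge[of d a b z] z by (auto simp: Int_commute)
  next
    assume "(a, b) \<notin> E" "(c, d) \<in> E"
    then show ?thesis
      using ab root_edge_meets_forest_edge[of b c d z] z by auto
  next
    assume "(a, b) \<notin> E" "(c, d) \<notin> E"
    then show ?thesis
      using ab cd ne root_edges_meet[of b d z] z by auto
  qed
qed (rule extended_vertex_off_edge)

end

section \<open>The point set\<close>

definition universal_grid :: "nat \<Rightarrow> (nat \<times> nat) set" where
  "universal_grid n = {(i, j). i + j < n \<and> (i = 0 \<or> n \<le> 2 * i + j)}"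

definition universal_points :: "nat \<Rightarrow> (real \<times> real) set" where
  "universal_points n = (\<lambda>(i, j). (real i, real j)) ` universal_grid n"

lemma universal_pointsE:
  assumes "x \<in> universal_points n"
  obtains i j where "x = (real i, real j)" and "(i, j) \<in> universal_grid n"
  using assms unfolding universal_points_def by auto

lemma universal_points_bounds:
  assumes "x \<in> universal_points n"
  shows "0 \<le> x" and "fst x + snd x + 1 \<le> real n"
proof -
  obtain i j where x: "x = (real i, real j)" and "i + j < n"
    using assms by (auto elim!: universal_pointsE simp: universal_grid_def)
  then have "real (i + j + 1) \<le> real n"
    by linarith
  then show "0 \<le> x" "fst x + snd x + 1 \<le> real n"
    by (simp_all add: x less_eq_prod_def)
qed

lemma universal_points_nonzero:
  assumes "x \<in> universal_points n" and "x \<noteq> 0"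
  shows "1 \<le> fst x + snd x"
proof -
  obtain i j where x: "x = (real i, real j)"
    using assms(1) by (auto elim!: universal_pointsE)
  with assms(2) have "1 \<le> i + j"
    by (auto simp: zero_prod_def)
  then show ?thesis
    unfolding x by (metis fst_conv snd_conv of_nat_1 of_nat_add of_nat_le_iff)
qed

lemma zero_in_universal_points: "0 < n \<Longrightarrow> 0 \<in> universal_points n"
  unfolding universal_points_def universal_grid_def zero_prod_def
  by (auto intro!: image_eqI[of _ _ "(0, 0)"])

lemma universal_points_shift_up:
  assumes "x \<in> universal_points n"
  shows "x + (0, real m) \<in> universal_points (n + m)"
proof -
  obtain i j where x: "x = (real i, real j)" and "(i, j) \<in> universal_grid n"
    using assms by (rule universal_pointsE)
  then have "(i, j + m) \<in> universal_grid (n + m)"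
    by (auto simp: universal_grid_def)
  then show ?thesis
    unfolding universal_points_def x by (force intro: image_eqI[of _ _ "(i, j + m)"])
qed

lemma universal_points_shift_right:
  assumes "x \<in> universal_points m" and "m \<le> N + 1"
  shows "x + (real N + 1, 0) \<in> universal_points (m + (N + 1))"
proof -
  obtain i j where x: "x = (real i, real j)" and "(i, j) \<in> universal_grid m"
    using assms(1) by (rule universal_pointsE)
  then have "(i + (N + 1), j) \<in> universal_grid (m + (N + 1))"
    using assms(2) by (auto simp: universal_grid_def)
  then show ?thesis
    unfolding universal_points_def x by (force intro: image_eqI[of _ _ "(i + (N + 1), j)"])
qed

definition grid_wedge :: "nat \<Rightarrow> (nat \<times> nat) set" where
  "grid_wedge n = {(i, j). 1 \<le> i \<and> i + j < n \<and> n \<le> 2 * i + j}"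

lemma finite_grid_wedge: "finite (grid_wedge n)"
  by (rule finite_subset[of _ "{..<n} \<times> {..<n}"]) (auto simp: grid_wedge_def)

lemma card_universal_grid: "card (universal_grid n) = n + card (grid_wedge n)"
proof -
  have "universal_grid n = (\<lambda>j. (0, j)) ` {..<n} \<union> grid_wedge n"
    by (auto simp: universal_grid_def grid_wedge_def)
  moreover have "(\<lambda>j. (0, j)) ` {..<n} \<inter> grid_wedge n = {}"
    by (auto simp: grid_wedge_def)
  moreover have "card ((\<lambda>j. (0::nat, j)) ` {..<n}) = n"
    by (simp add: card_image inj_on_def)
  ultimately show ?thesis
    using finite_grid_wedge by (simp add: card_Un_disjoint)
qed

lemma card_grid_wedge_lower: "(n div 2) * (n div 2) \<le> card (grid_wedge n)"
proof -
  define k where "k = n div 2"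
  define f where "f = (\<lambda>(a, b). if b < a then (a, b + n - 2 * a) else (n - 1 - b, a))"
  have "inj_on f ({..<k} \<times> {..<k})"
    by (rule inj_onI) (auto simp: f_def k_def split: if_splits)
  moreover have "f ` ({..<k} \<times> {..<k}) \<subseteq> grid_wedge n"
    by (auto simp: f_def k_def grid_wedge_def split: if_splits)
  ultimately have "card ({..<k} \<times> {..<k}) \<le> card (grid_wedge n)"
    using card_inj_on_le finite_grid_wedge by blast
  then show ?thesis
    by (simp add: k_def card_cartesian_product)
qed

lemma card_grid_wedge_upper: "card (grid_wedge n) \<le> (n div 2 + 1) * (n div 2 + 1)"
proof -
  define k where "k = n div 2"
  define g where "g = (\<lambda>(i, j). if 2 * i \<le> n then (i, j + 2 * i - n) else (j, n - i))"
  have "inj_on g (grid_wedge n)"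
    by (rule inj_onI) (auto simp: g_def grid_wedge_def split: if_splits)
  moreover have "g ` grid_wedge n \<subseteq> {..k} \<times> {..k}"
    by (auto simp: g_def k_def grid_wedge_def split: if_splits)
  ultimately have "card (grid_wedge n) \<le> card ({..k} \<times> {..k})"
    using card_inj_on_le by blast
  then show ?thesis
    by (simp add: k_def card_cartesian_product)
qed

lemma finite_universal_points: "finite (universal_points n)"
proof -
  have "universal_grid n \<subseteq> {..<n} \<times> {..<n}"
    by (auto simp: universal_grid_def)
  then show ?thesis
    unfolding universal_points_def using finite_subset by blast
qed

lemma card_universal_points: "card (universal_points n) = n + card (grid_wedge n)"
proof -
  have "inj_on (\<lambda>(i, j). (real i, real j)) (universal_grid n)"
    by (auto simp: inj_on_def)
  then show ?thesis
    unfolding universal_points_def by (simp add: card_image card_universal_grid)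
qed

lemma card_universal_points_bounds:
  assumes "1 \<le> n"
  shows "real n ^ 2 / 4 + real n / 2 \<le> real (card (universal_points n))"
    and "real (card (universal_points n)) \<le> real n ^ 2 / 4 + 3 * real n"
proof -
  define k where "k = n div 2"
  have "n \<le> 2 * k + 1" "2 * k \<le> n"
    unfolding k_def by linarith+
  then have k: "real n - 1 \<le> 2 * real k" "2 * real k \<le> real n"
    by linarith+
  have "n + k * k \<le> card (universal_points n)" "card (universal_points n) \<le> n + (k + 1) * (k + 1)"
    using card_grid_wedge_lower[of n] card_grid_wedge_upper[of n]
    by (simp_all add: card_universal_points k_def)
  then have "real (n + k * k) \<le> real (card (universal_points n))"
    "real (card (universal_points n)) \<le> real (n + (k + 1) * (k + 1))"
    by (simp_all only: of_nat_le_iff)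
  then have card: "real n + real k * real k \<le> real (card (universal_points n))"
    "real (card (universal_points n)) \<le> real n + (real k * real k + 2 * real k + 1)"
    by (simp_all add: algebra_simps)
  have "(real n - 1) ^ 2 \<le> (2 * real k) ^ 2" "(2 * real k) ^ 2 \<le> real n ^ 2"
    using k assms by (intro power_mono; simp)+
  then have "real n ^ 2 - 2 * real n + 1 \<le> 4 * (real k * real k)"
    "4 * (real k * real k) \<le> real n ^ 2"
    by (simp_all add: power2_eq_square algebra_simps)
  then show "real n ^ 2 / 4 + real n / 2 \<le> real (card (universal_points n))"
    and "real (card (universal_points n)) \<le> real n ^ 2 / 4 + 3 * real n"
    using card k assms by linarith+
qed

section \<open>Drawings on the point set\<close>

definition grid_tree_drawing ::
  "'a set \<Rightarrow> ('a \<times> 'a) set \<Rightarrow> 'a \<Rightarrow> ('a \<Rightarrow> real \<times> real) \<Rightarrow> bool" where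
  "grid_tree_drawing V E r p \<longleftrightarrow>
     dominance_drawing V E p \<and> planar_straight_line V E p \<and> p r = 0 \<and>
     p ` V \<subseteq> universal_points (card V)"

text \<open>The origin is left free for the root to be attached.\<close>

definition grid_forest_drawing ::
  "'a set \<Rightarrow> ('a \<times> 'a) set \<Rightarrow> 'a set \<Rightarrow> ('a \<Rightarrow> real \<times> real) \<Rightarrow> bool" where
  "grid_forest_drawing V E R p \<longleftrightarrow>
     dominance_drawing V E p \<and> planar_straight_line V E p \<and> roots_exposed E R p \<and>
     p ` V \<subseteq> universal_points (Suc (card V)) - {0}"

lemma grid_forest_drawing_single:
  assumes tree: "grid_tree_drawing A EA c q" and EA: "EA \<subseteq> A \<times> A"
  shows "grid_forest_drawing A EA {c} (\<lambda>v. q v + (0, 1))"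
proof -
  have grid: "q v \<in> universal_points (card A)" if "v \<in> A" for v
    using tree that unfolding grid_tree_drawing_def by blast
  have "roots_exposed EA {c} (\<lambda>v. q v + (0, 1))"
    unfolding roots_exposed_def
  proof (intro ballI allI impI)
    fix \<rho> a b z assume "\<rho> \<in> {c}" and ab: "(a, b) \<in> EA"
      and z: "z \<in> closed_segment (q a + (0, 1)) (q b + (0, 1))" and le: "z \<le> q \<rho> + (0, 1)"
    have "(0, 1) \<le> q v + (0, 1)" if "v \<in> A" for v
      using universal_points_bounds(1)[OF grid[OF that]] by simp
    then have "(0, 1) \<le> z"
      using ab EA closed_segment_ge[OF z] by blast
    moreover have "q \<rho> + (0, 1) = (0, 1)"
      using \<open>\<rho> \<in> {c}\<close> tree unfolding grid_tree_drawing_def by simp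
    ultimately show "z = q \<rho> + (0, 1)"
      using le by simp
  qed
  moreover have "(\<lambda>v. q v + (0, 1)) ` A \<subseteq> universal_points (Suc (card A)) - {0}"
  proof (rule image_subsetI)
    fix v assume "v \<in> A"
    have "0 \<le> snd (q v)"
      using universal_points_bounds(1)[OF grid[OF \<open>v \<in> A\<close>]] by (simp add: less_eq_prod_def)
    then have "q v + (0, 1) \<noteq> 0"
      by (cases "q v") (auto simp: zero_prod_def)
    then show "q v + (0, 1) \<in> universal_points (Suc (card A)) - {0}"
      using universal_points_shift_up[OF grid[OF \<open>v \<in> A\<close>], of 1] by simp
  qed
  moreover have "dominance_drawing A EA (\<lambda>v. q v + (0, 1))"
    using tree by (simp add: grid_tree_drawing_def dominance_drawing_translate)
  moreover have "planar_straight_line A EA (\<lambda>v. q v + (0, 1))"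
    using tree planar_straight_line_translate unfolding grid_tree_drawing_def by blast
  ultimately show ?thesis
    unfolding grid_forest_drawing_def by blast
qed

locale grid_merge =
  fixes A B :: "'a set" and EA EB :: "('a \<times> 'a) set" and c :: 'a and R :: "'a set"
    and q p :: "'a \<Rightarrow> real \<times> real"
  assumes tree: "grid_tree_drawing A EA c q" and forest: "grid_forest_drawing B EB R p"
    and EA: "EA \<subseteq> A \<times> A" and EB: "EB \<subseteq> B \<times> B" and c: "c \<in> A" and R: "R \<subseteq> B"
    and finite: "finite A" "finite B" and disjoint: "A \<inter> B = {}"
    and small: "card A \<le> card B + 1"
begin

definition merged :: "'a \<Rightarrow> real \<times> real" where
  "merged v = (if v \<in> A then q v + (real (card B) + 1, 0) else p v + (0, real (card A)))"

lemma merged_A: "v \<in> A \<Longrightarrow> merged v = q v + (real (card B) + 1, 0)"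
  by (simp add: merged_def)

lemma merged_B: "v \<in> B \<Longrightarrow> merged v = p v + (0, real (card A))"
  using disjoint by (auto simp: merged_def)

lemma tree_points: "v \<in> A \<Longrightarrow> q v \<in> universal_points (card A)"
  using tree unfolding grid_tree_drawing_def by blast

lemma forest_points: "v \<in> B \<Longrightarrow> p v \<in> universal_points (Suc (card B)) - {0}"
  using forest unfolding grid_forest_drawing_def by blast

lemma merged_right:
  assumes "v \<in> A"
  shows "(real (card B) + 1, 0) \<le> merged v" and "snd (merged v) + 1 \<le> real (card A)"
  using universal_points_bounds[OF tree_points[OF assms]]
  by (simp_all add: merged_A[OF assms] less_eq_prod_def)

lemma merged_above:
  assumes "v \<in> B"
  shows "fst (merged v) \<le> real (card B)" and "(0, real (card A)) \<le> merged v"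
  using universal_points_bounds[of "p v" "Suc (card B)"] forest_points[OF assms]
  by (auto simp: merged_B[OF assms] less_eq_prod_def)

lemma merged_root: "merged c = (real (card B) + 1, 0)"
  using tree c by (simp add: merged_A grid_tree_drawing_def)

lemma card_A_pos: "0 < card A"
  using c finite card_gt_0_iff by blast

lemma dominance_drawing_merged: "dominance_drawing (A \<union> B) (EA \<union> EB) merged"
proof (rule dominance_drawing_Un)
  have "dominance_drawing A EA (\<lambda>v. q v + (real (card B) + 1, 0))"
    using tree by (simp add: grid_tree_drawing_def dominance_drawing_translate)
  then show "dominance_drawing A EA merged"
    by (rule dominance_drawing_congI) (simp add: merged_A)
  have "dominance_drawing B EB (\<lambda>v. p v + (0, real (card A)))"
    using forest by (simp add: grid_forest_drawing_def dominance_drawing_translate)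
  then show "dominance_drawing B EB merged"
    by (rule dominance_drawing_congI) (simp add: merged_B)
  fix a b assume "a \<in> A" "b \<in> B"
  then have "real (card B) + 1 \<le> fst (merged a)" "snd (merged a) + 1 \<le> real (card A)"
    "fst (merged b) \<le> real (card B)" "real (card A) \<le> snd (merged b)"
    using merged_right[of a] merged_above[of b] by (simp_all add: less_eq_prod_def)
  then show "\<not> merged a \<le> merged b \<and> \<not> merged b \<le> merged a"
    unfolding less_eq_prod_def by linarith
qed (use EA EB in auto)

lemma planar_straight_line_merged: "planar_straight_line (A \<union> B) (EA \<union> EB) merged"
proof (rule planar_straight_line_Un)
  have "planar_straight_line A EA (\<lambda>v. q v + (real (card B) + 1, 0))"
    using tree planar_straight_line_translate unfolding grid_tree_drawing_def by blast
  then show "planar_straight_line A EA merged"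
    by (rule planar_straight_line_congI[OF _ EA]) (simp add: merged_A)
  have "planar_straight_line B EB (\<lambda>v. p v + (0, real (card A)))"
    using forest planar_straight_line_translate unfolding grid_forest_drawing_def by blast
  then show "planar_straight_line B EB merged"
    by (rule planar_straight_line_congI[OF _ EB]) (simp add: merged_B)
  show "real (card B) < fst (merged v)" if "v \<in> A" for v
    using merged_right(1)[OF that] by (simp add: less_eq_prod_def)
  show "fst (merged v) \<le> real (card B)" if "v \<in> B" for v
    using merged_above(1)[OF that] .
qed (use EA EB in auto)

lemma tree_edge_above_root:
  assumes "(a, b) \<in> EA" and "z \<in> closed_segment (merged a) (merged b)"
  shows "merged c \<le> z"
  using assms EA merged_right(1) closed_segment_ge[OF assms(2)] by (auto simp: merged_root)

lemma forest_edge_above_tree: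
  assumes "(a, b) \<in> EB" and "z \<in> closed_segment (merged a) (merged b)"
  shows "(0, real (card A)) \<le> z"
  using assms EB merged_above(2) closed_segment_ge[OF assms(2)] by auto

lemma roots_exposed_merged: "roots_exposed (EA \<union> EB) (insert c R) merged"
  unfolding roots_exposed_def
proof (intro ballI allI impI)
  fix \<rho> a b z assume \<rho>: "\<rho> \<in> insert c R" and ab: "(a, b) \<in> EA \<union> EB"
    and z: "z \<in> closed_segment (merged a) (merged b)" and le: "z \<le> merged \<rho>"
  show "z = merged \<rho>"
  proof (cases "(a, b) \<in> EA")
    case True
    then have "merged c \<le> z"
      using z by (rule tree_edge_above_root)
    show ?thesis
    proof (cases "\<rho> = c")
      case False
      then have "fst (merged \<rho>) \<le> real (card B)"
        using \<rho> R merged_above(1) by blast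
      then show ?thesis
        using \<open>merged c \<le> z\<close> le by (simp add: merged_root less_eq_prod_def)
    qed (use \<open>merged c \<le> z\<close> le in simp)
  next
    case False
    with ab have EB_ab: "(a, b) \<in> EB" by blast
    with z le card_A_pos have "\<rho> \<noteq> c"
      using forest_edge_above_tree by (fastforce simp: merged_root less_eq_prod_def)
    with \<rho> have "\<rho> \<in> R" by blast
    have "merged a = p a + (0, real (card A))" and "merged b = p b + (0, real (card A))"
      using EB_ab EB merged_B by auto
    then have "z - (0, real (card A)) \<in> closed_segment (p a) (p b)"
      using z by (simp add: closed_segment_translate_iff)
    moreover have "z - (0, real (card A)) \<le> p \<rho>"
      using le merged_B \<open>\<rho> \<in> R\<close> R by (auto simp: less_eq_prod_def)
    ultimately have "z - (0, real (card A)) = p \<rho>"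
      using forest EB_ab \<open>\<rho> \<in> R\<close> unfolding grid_forest_drawing_def roots_exposed_def by blast
    then show ?thesis
      using merged_B \<open>\<rho> \<in> R\<close> R by (auto simp: algebra_simps)
  qed
qed

lemma merged_points: "merged ` (A \<union> B) \<subseteq> universal_points (Suc (card (A \<union> B))) - {0}"
proof (rule image_subsetI)
  fix v assume "v \<in> A \<union> B"
  have card: "Suc (card (A \<union> B)) = card A + (card B + 1)"
    using finite disjoint by (simp add: card_Un_disjoint)
  show "merged v \<in> universal_points (Suc (card (A \<union> B))) - {0}"
  proof (cases "v \<in> A")
    case True
    then have "merged v \<in> universal_points (card A + (card B + 1))"
      using universal_points_shift_right[OF tree_points small] by (simp add: merged_A)
    moreover have "merged v \<noteq> 0"
      using merged_right(1)[OF True] by (auto simp: less_eq_prod_def zero_prod_def)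
    ultimately show ?thesis
      by (simp add: card)
  next
    case False
    with \<open>v \<in> A \<union> B\<close> have "v \<in> B" by blast
    then have "merged v \<in> universal_points (Suc (card B) + card A)"
      using universal_points_shift_up[of "p v" "Suc (card B)" "card A"] forest_points
      by (simp add: merged_B)
    moreover have "merged v \<noteq> 0"
      using merged_above(2)[OF \<open>v \<in> B\<close>] card_A_pos by (auto simp: less_eq_prod_def zero_prod_def)
    ultimately show ?thesis
      by (simp add: card add.commute)
  qed
qed

lemma grid_forest_drawing_merged:
  "grid_forest_drawing (A \<union> B) (EA \<union> EB) (insert c R) merged"
  unfolding grid_forest_drawing_def
  using dominance_drawing_merged planar_straight_line_merged roots_exposed_merged merged_points
  by blast

end

section \<open>Rooted trees\<close>

lemma rtrancl_Restr_closed: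
  assumes closed: "E `` X \<subseteq> X" and "u \<in> X"
  shows "(u, v) \<in> (Restr E X)\<^sup>* \<longleftrightarrow> (u, v) \<in> E\<^sup>*"
proof
  show "(u, v) \<in> (Restr E X)\<^sup>* \<Longrightarrow> (u, v) \<in> E\<^sup>*"
    using rtrancl_mono[of "Restr E X" E] by blast
  show "(u, v) \<in> (Restr E X)\<^sup>*" if "(u, v) \<in> E\<^sup>*"
    using that
  proof (induction rule: rtrancl_induct)
    case (step y z)
    have "y \<in> X"
      using rtrancl_stays_in[of "Restr E X" X] step.IH \<open>u \<in> X\<close> by blast
    with step.hyps(2) closed have "(y, z) \<in> Restr E X"
      by blast
    with step.IH show ?case
      by (rule rtrancl_into_rtrancl)
  qed simp
qed

lemma Restr_Un_closed:
  "E `` A \<subseteq> A \<Longrightarrow> E `` B \<subseteq> B \<Longrightarrow> Restr E (A \<union> B) = Restr E A \<union> Restr E B"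
  by blast

locale arborescence =
  fixes V :: "'a set" and E :: "('a \<times> 'a) set" and r :: 'a
  assumes tree: "rooted_tree V E r"
begin

lemma finite_V: "finite V"
  and edges_subset: "E \<subseteq> V \<times> V"
  and root_in_V: "r \<in> V"
  and no_edge_into_root: "(u, r) \<notin> E"
  and unique_parent: "v \<in> V \<Longrightarrow> v \<noteq> r \<Longrightarrow> \<exists>!u. (u, v) \<in> E"
  and reachable_from_root: "v \<in> V \<Longrightarrow> (r, v) \<in> E\<^sup>*"
  using tree unfolding rooted_tree_def by blast+

lemma rtrancl_into_root: "(v, r) \<in> E\<^sup>* \<Longrightarrow> v = r"
  by (erule rtranclE) (auto simp: no_edge_into_root)

lemma single_valued_converse: "single_valued (E\<inverse>)"
proof (rule single_valuedI)
  fix v a b assume "(v, a) \<in> E\<inverse>" "(v, b) \<in> E\<inverse>"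
  moreover from this have "v \<in> V" "v \<noteq> r"
    using edges_subset no_edge_into_root by auto
  ultimately show "a = b"
    using unique_parent by blast
qed

definition children :: "'a set" where
  "children = {c. (r, c) \<in> E}"

definition subtree :: "'a \<Rightarrow> 'a set" where
  "subtree c = {v. (c, v) \<in> E\<^sup>*}"

definition subforest :: "'a set \<Rightarrow> 'a set" where
  "subforest R = (\<Union>c\<in>R. subtree c)"

lemma children_subset: "children \<subseteq> V - {r}"
  using edges_subset no_edge_into_root by (auto simp: children_def)

lemma root_in_subtree: "c \<in> subtree c"
  by (simp add: subtree_def)

lemma subtree_closed: "E `` subtree c \<subseteq> subtree c"
  by (auto simp: subtree_def)

lemma subforest_closed: "E `` subforest R \<subseteq> subforest R"
  using subtree_closed unfolding subforest_def by blast

lemma ancestor_of_child: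
  assumes "c \<in> children" and "(v, c) \<in> E\<^sup>*" and "v \<noteq> r"
  shows "v = c"
  using assms(2)
proof (cases rule: rtranclE)
  case (step u)
  then have "u = r"
    using assms(1) single_valued_converse unfolding children_def single_valued_def by blast
  then show ?thesis
    using step(1) assms(3) rtrancl_into_root by blast
qed simp

lemma subtree_subset:
  assumes "c \<in> children"
  shows "subtree c \<subseteq> V - {r}"
proof
  fix v assume "v \<in> subtree c"
  then have "(c, v) \<in> E\<^sup>*"
    by (simp add: subtree_def)
  moreover have "c \<in> V" "c \<noteq> r"
    using assms children_subset by auto
  ultimately show "v \<in> V - {r}"
    using rtrancl_stays_in[OF edges_subset] rtrancl_into_root by blast
qed

lemma subtrees_disjoint:
  assumes "c \<in> children" "c' \<in> children" "c \<noteq> c'"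
  shows "subtree c \<inter> subtree c' = {}"
proof (rule ccontr)
  assume "subtree c \<inter> subtree c' \<noteq> {}"
  then obtain v where "(v, c) \<in> (E\<inverse>)\<^sup>*" "(v, c') \<in> (E\<inverse>)\<^sup>*"
    by (auto simp: subtree_def rtrancl_converse)
  then have "(c, c') \<in> E\<^sup>* \<or> (c', c) \<in> E\<^sup>*"
    using single_valued_confluent[OF single_valued_converse] by (auto simp: rtrancl_converse)
  then show False
    using ancestor_of_child assms subtree_subset root_in_subtree by blast
qed

lemma subforest_children: "subforest children = V - {r}"
proof
  show "subforest children \<subseteq> V - {r}"
    using subtree_subset by (auto simp: subforest_def)
  show "V - {r} \<subseteq> subforest children"
  proof
    fix v assume "v \<in> V - {r}"
    then have "(r, v) \<in> E\<^sup>*" and "v \<noteq> r"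
      using reachable_from_root by auto
    then obtain c where "(r, c) \<in> E" "(c, v) \<in> E\<^sup>*"
      by (auto elim: converse_rtranclE)
    then show "v \<in> subforest children"
      by (auto simp: subforest_def children_def subtree_def)
  qed
qed

lemma rooted_tree_subtree:
  assumes "c \<in> children"
  shows "rooted_tree (subtree c) (Restr E (subtree c)) c"
  unfolding rooted_tree_def
proof (intro conjI ballI allI impI)
  show "finite (subtree c)"
    using subtree_subset[OF assms] finite_V finite_subset by blast
  show "c \<in> subtree c"
    by (rule root_in_subtree)
  show "(u, c) \<notin> Restr E (subtree c)" for u
  proof
    assume "(u, c) \<in> Restr E (subtree c)"
    then have "(u, c) \<in> E" and "u \<noteq> r"
      using subtree_subset[OF assms] by auto
    with assms show False
      using single_valued_converse unfolding children_def single_valued_def by blast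
  qed
  show "(c, v) \<in> (Restr E (subtree c))\<^sup>*" if "v \<in> subtree c" for v
    using that rtrancl_Restr_closed[OF subtree_closed root_in_subtree] by (simp add: subtree_def)
  show "\<exists>!u. (u, v) \<in> Restr E (subtree c)" if v: "v \<in> subtree c" "v \<noteq> c" for v
  proof -
    have "(c, v) \<in> E\<^sup>*"
      using v(1) by (simp add: subtree_def)
    then obtain u where "(c, u) \<in> E\<^sup>*" "(u, v) \<in> E"
      using v(2) by (cases rule: rtranclE) auto
    then have "(u, v) \<in> Restr E (subtree c)"
      using v(1) by (simp add: subtree_def)
    then show ?thesis
      using single_valued_converse unfolding single_valued_def by (intro ex1I[of _ u]) auto
  qed
qed auto

lemma card_subtree_less:
  assumes "c \<in> children"
  shows "card (subtree c) < card V"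
proof -
  have "subtree c \<subset> V"
    using subtree_subset[OF assms] root_in_V by blast
  then show ?thesis
    by (rule psubset_card_mono[OF finite_V])
qed

lemma nonroot_closed: "E `` (V - {r}) \<subseteq> V - {r}"
  using edges_subset no_edge_into_root by auto

lemma root_edges: "E = {r} \<times> children \<union> Restr E (V - {r})"
  using edges_subset no_edge_into_root by (auto simp: children_def)

lemma dominance_drawing_attach:
  assumes dom: "dominance_drawing (V - {r}) (Restr E (V - {r})) p"
    and pos: "\<And>v. v \<in> V - {r} \<Longrightarrow> 0 \<le> p v \<and> p v \<noteq> 0"
  shows "dominance_drawing V E (p(r := 0))"
  unfolding dominance_drawing_iff
proof (intro conjI ballI)
  have inj: "inj_on p (V - {r})" and reach: "\<And>u v. u \<in> V - {r} \<Longrightarrow> v \<in> V - {r} \<Longrightarrow>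
      (u, v) \<in> (Restr E (V - {r}))\<^sup>* \<longleftrightarrow> p u \<le> p v"
    using dom by (simp_all add: dominance_drawing_iff)
  show "inj_on (p(r := 0)) V"
  proof (rule inj_onI)
    fix u v assume "u \<in> V" "v \<in> V" and eq: "(p(r := 0)) u = (p(r := 0)) v"
    then show "u = v"
      using inj pos[of u] pos[of v] by (cases "u = r"; cases "v = r") (auto simp: inj_on_def)
  qed
  fix u v assume u: "u \<in> V" and v: "v \<in> V"
  show "(u, v) \<in> E\<^sup>* \<longleftrightarrow> (p(r := 0)) u \<le> (p(r := 0)) v"
  proof (cases "u = r")
    case True
    then show ?thesis
      using reachable_from_root[OF v] pos[of v] v by (cases "v = r") auto
  next
    case False
    show ?thesis
    proof (cases "v = r")
      case True
      have "\<not> p u \<le> 0"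
        using pos[of u] u \<open>u \<noteq> r\<close> by (metis DiffI antisym singletonD)
      then show ?thesis
        using True rtrancl_into_root \<open>u \<noteq> r\<close> by auto
    next
      case False
      then show ?thesis
        using reach[of u v] \<open>u \<noteq> r\<close> u v rtrancl_Restr_closed[OF nonroot_closed, of u v] by simp
    qed
  qed
qed

lemma dominance_below_child:
  assumes dom: "dominance_drawing (V - {r}) (Restr E (V - {r})) p"
    and "c \<in> children" and "w \<in> V - {r}" and "p w \<le> p c"
  shows "w = c"
proof -
  have "c \<in> V - {r}"
    using assms(2) children_subset by blast
  then have "(w, c) \<in> E\<^sup>*"
    using dom assms(3,4) rtrancl_Restr_closed[OF nonroot_closed assms(3)]
    unfolding dominance_drawing_iff by blast
  then show ?thesis
    using ancestor_of_child assms(2,3) by blast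
qed

lemma grid_tree_drawing_attach:
  assumes forest: "grid_forest_drawing (V - {r}) (Restr E (V - {r})) children p"
  shows "grid_tree_drawing V E r (p(r := 0))"
proof -
  have card: "Suc (card (V - {r})) = card V"
    using finite_V root_in_V by (rule card_Suc_Diff1)
  have dom: "dominance_drawing (V - {r}) (Restr E (V - {r})) p"
    using forest by (simp add: grid_forest_drawing_def)
  have points: "p v \<in> universal_points (card V) - {0}" if "v \<in> V - {r}" for v
    using forest that unfolding grid_forest_drawing_def card by blast
  then have pos: "0 \<le> p v \<and> 1 \<le> fst (p v) + snd (p v)" if "v \<in> V - {r}" for v
    using that universal_points_bounds(1) universal_points_nonzero by blast
  interpret forest_apex "V - {r}" "Restr E (V - {r})" children r p
    using forest pos dominance_below_child[OF dom] children_subset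
    by unfold_locales (auto simp: grid_forest_drawing_def)
  have "dominance_drawing V E (p(r := 0))"
    using dom pos points by (intro dominance_drawing_attach) auto
  moreover have "planar_straight_line V E (p(r := 0))"
    using planar_straight_line_extended root_in_V
    by (simp add: extended_def insert_absorb flip: root_edges)
  moreover have "(p(r := 0)) ` V \<subseteq> universal_points (card V)"
    using points zero_in_universal_points[of "card V"] card by auto
  ultimately show ?thesis
    by (simp add: grid_tree_drawing_def)
qed

lemma finite_subforest:
  assumes "R \<subseteq> children"
  shows "finite (subforest R)"
proof -
  have "subforest R \<subseteq> V"
    using assms subtree_subset unfolding subforest_def by blast
  then show ?thesis
    using finite_V finite_subset by blast
qed

lemma grid_forest_drawing_insert:
  assumes q: "grid_tree_drawing (subtree c) (Restr E (subtree c)) c q"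
    and p: "grid_forest_drawing (subforest S) (Restr E (subforest S)) S p"
    and "c \<in> children" "S \<subseteq> children" "c \<notin> S" "d \<in> S"
    and smallest: "card (subtree c) \<le> card (subtree d)"
  shows "\<exists>p'. grid_forest_drawing (subforest (insert c S)) (Restr E (subforest (insert c S)))
    (insert c S) p'"
proof -
  have "card (subtree d) \<le> card (subforest S)"
    using \<open>d \<in> S\<close> \<open>S \<subseteq> children\<close> finite_subforest
    by (intro card_mono) (auto simp: subforest_def)
  with smallest have "card (subtree c) \<le> card (subforest S) + 1"
    by simp
  then interpret grid_merge "subtree c" "subforest S" "Restr E (subtree c)" "Restr E (subforest S)"
    c S q p
    using q p assms(3-5) finite_subforest[of "{c}"] finite_subforest[of S]
      subtrees_disjoint root_in_subtree
    by unfold_locales (auto simp: subforest_def)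
  have "subforest (insert c S) = subtree c \<union> subforest S"
    by (simp add: subforest_def)
  moreover have "Restr E (subtree c \<union> subforest S) = Restr E (subtree c) \<union> Restr E (subforest S)"
    using Restr_Un_closed[OF subtree_closed subforest_closed] .
  ultimately show ?thesis
    using grid_forest_drawing_merged by auto
qed

lemma grid_forest_drawing_subforest:
  assumes subtrees: "\<And>c. c \<in> children \<Longrightarrow> \<exists>q. grid_tree_drawing (subtree c) (Restr E (subtree c)) c q"
    and "R \<subseteq> children" and "R \<noteq> {}"
  shows "\<exists>p. grid_forest_drawing (subforest R) (Restr E (subforest R)) R p"
proof -
  have "finite R"
    by (rule finite_subset[OF _ finite_V]) (use assms(2) children_subset in blast)
  \<comment> \<open>Inserting the subtrees in decreasing order of size makes each merged one the smallest
    so far.\<close>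
  then show ?thesis
    using assms(2,3)
  proof (induction rule: finite_ranking_induct[where f = "\<lambda>c. - int (card (subtree c))"])
    case (insert c S)
    obtain q where q: "grid_tree_drawing (subtree c) (Restr E (subtree c)) c q"
      using subtrees insert.prems(1) by blast
    consider "c \<in> S" | "S = {}" | d where "c \<notin> S" "d \<in> S"
      by blast
    then show ?case
    proof cases
      case 1
      then show ?thesis
        using insert.IH insert.prems by (simp add: insert_absorb)
    next
      case 2
      then show ?thesis
        using grid_forest_drawing_single[OF q Int_lower2] by (auto simp: subforest_def)
    next
      case (3 d)
      then obtain p where "grid_forest_drawing (subforest S) (Restr E (subforest S)) S p"
        using insert.IH insert.prems by blast
      moreover have "card (subtree c) \<le> card (subtree d)"
        using insert.hyps(2)[OF \<open>d \<in> S\<close>] by simp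
      ultimately show ?thesis
        using grid_forest_drawing_insert[OF q] 3 insert.prems(1) by blast
    qed
  qed simp
qed

end

theorem grid_tree_drawing_exists: "rooted_tree V E r \<Longrightarrow> \<exists>p. grid_tree_drawing V E r p"
proof (induction "card V" arbitrary: V E r rule: less_induct)
  case less
  interpret arborescence V E r
    by (rule arborescence.intro) (rule less.prems)
  show ?case
  proof (cases "children = {}")
    case True
    then have "V = {r}" and "E = {}"
      using subforest_children root_in_V root_edges by (auto simp: subforest_def)
    then have "grid_tree_drawing V E r (\<lambda>_. 0)"
      using zero_in_universal_points[of 1]
      by (simp add: grid_tree_drawing_def dominance_drawing_iff planar_straight_line_def)
    then show ?thesis by blast
  next
    case False
    have "\<exists>q. grid_tree_drawing (subtree c) (Restr E (subtree c)) c q" if "c \<in> children" for c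
      using less.hyps card_subtree_less rooted_tree_subtree that by blast
    then obtain p where "grid_forest_drawing (V - {r}) (Restr E (V - {r})) children p"
      using grid_forest_drawing_subforest[of children] False subforest_children by auto
    then show ?thesis
      using grid_tree_drawing_attach by blast
  qed
qed

theorem theorem15:
  shows "\<exists>U :: nat \<Rightarrow> (real \<times> real) set.
    (\<forall>n. finite (U n)) \<and>
    (\<exists>c1 c2 :: real. c1 > 0 \<and> c2 > 0 \<and> (\<exists>N. \<forall>n\<ge>N.
        real n ^ 2 / 4 + c1 * real n \<le> real (card (U n)) \<and>
        real (card (U n)) \<le> real n ^ 2 / 4 + c2 * real n)) \<and>
    (\<forall>n (V :: nat set) E r. rooted_tree V E r \<and> card V = n \<longrightarrow>
        planar_dominance_drawing_on V E (U n))"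
proof (intro exI[of _ universal_points] conjI allI impI)
  show "finite (universal_points n)" for n
    by (rule finite_universal_points)
  show "\<exists>c1 c2 :: real. c1 > 0 \<and> c2 > 0 \<and> (\<exists>N. \<forall>n\<ge>N.
      real n ^ 2 / 4 + c1 * real n \<le> real (card (universal_points n)) \<and>
      real (card (universal_points n)) \<le> real n ^ 2 / 4 + c2 * real n)"
  proof -
    have "\<forall>n\<ge>1. real n ^ 2 / 4 + 1 / 2 * real n \<le> real (card (universal_points n)) \<and>
        real (card (universal_points n)) \<le> real n ^ 2 / 4 + 3 * real n"
      using card_universal_points_bounds by simp
    then show ?thesis
      by (intro exI[of _ "1 / 2"] exI[of _ "3 :: real"] conjI exI[of _ "1 :: nat"]) simp_all
  qed
  fix n and V :: "nat set" and E r
  assume tree: "rooted_tree V E r \<and> card V = n"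
  then obtain p where "grid_tree_drawing V E r p"
    using grid_tree_drawing_exists[of V E r] by blast
  with tree show "planar_dominance_drawing_on V E (universal_points n)"
    unfolding planar_dominance_drawing_on_def grid_tree_drawing_def by (intro exI[of _ p]) simp
qed

end
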